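(* Let $N=6$, $k=3$, $T=2$, $p_{11}=0.3$, $p_{01}=0.5$ (so $p_{11}<p_{01}$), and initial beliefs $(\omega_1,\dots,\omega_6)=(0.99,0.5,0.4,0.39,0.25,0.25)$. Consider the policy that senses channels $\{1,2,4\}$ in slot $1$ and, in slot $2$, senses three channels with the largest updated beliefs. Its expected total reward over the two slots is strictly larger than that of the myopic sensing policy, which senses $\{1,2,3\}$ in slot $1$ and three channels with the largest updated beliefs in slot $2$. In particular, the myopic sensing policy is not optimal in this instance.
   Context: Opportunistic spectrum access model. There are $N$ channels. The state $S_i(t)\in\{0,1\}$ of channel $i$ in slot $t$ (0 = busy, 1 = idle) evolves as a two-state discrete-time Markov chain with transition probabilities $p_{ij}=\Pr(S_i(t+1)=j\mid S_i(t)=i)$. The chains are independent across channels and all have the same transition probabilities $p_{01},p_{11}$. The initial states are independent with $\Pr(S_i(1)=1)=\omega_i$. In each slot, a user senses a set of exactly $k$ channels, chosen based on past actions and observations. It observes their states and obtains reward $1$ if at least one sensed channel is idle, and reward $0$ otherwise. The objective is the expected total reward over $T$ slots. Beliefs $\omega_i(t)$ (conditional probability that channel $i$ is idle in slot $t$) update as follows: $\omega_i(t+1)=p_{11}$ if $i$ was sensed and found idle; $\omega_i(t+1)=p_{01}$ if $i$ was sensed and found busy; and $\omega_i(t+1)=\tau(\omega_i(t))$ if $i$ was not sensed, where $\tau(\omega)=\omega p_{11}+(1-\omega)p_{01}$. The myopic sensing policy senses, in each slot, $k$ channels with the largest current beliefs. A policy is optimal if it maximizes the expected total reward. *)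

theory Defs
  imports Complex_Main
begin

text \<open>Channels are 1..N; beliefs are functions
  nat => real (probability that channel i is idle). An action is the set A of sensed
  channels; an observation is the set I (subset of A) of sensed channels found idle. A (general, history-dependent)
  policy maps the slot number t (starting at 1) and the history to the set to sense.\<close>

type_synonym belief = "nat \<Rightarrow> real"
type_synonym hist = "(nat set \<times> nat set) list"
type_synonym policy = "nat \<Rightarrow> hist \<Rightarrow> nat set"

definition tau :: "real \<Rightarrow> real \<Rightarrow> real \<Rightarrow> real" where
  "tau p01 p11 w = w * p11 + (1 - w) * p01"

definition upd :: "real \<Rightarrow> real \<Rightarrow> belief \<Rightarrow> nat set \<Rightarrow> nat set \<Rightarrow> belief" where
  "upd p01 p11 w A I = (\<lambda>i. if i \<in> I then p11 else if i \<in> A then p01 else tau p01 p11 (w i))"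

definition belief_after :: "real \<Rightarrow> real \<Rightarrow> belief \<Rightarrow> hist \<Rightarrow> belief" where
  "belief_after p01 p11 w0 h = foldl (\<lambda>w (A, I). upd p01 p11 w A I) w0 h"

definition obs_prob :: "belief \<Rightarrow> nat set \<Rightarrow> nat set \<Rightarrow> real" where
  "obs_prob w A I = (\<Prod>i\<in>I. w i) * (\<Prod>i\<in>A - I. 1 - w i)"

fun val :: "real \<Rightarrow> real \<Rightarrow> policy \<Rightarrow> nat \<Rightarrow> nat \<Rightarrow> hist \<Rightarrow> belief \<Rightarrow> real" where
  "val p01 p11 pol 0 t h w = 0"
| "val p01 p11 pol (Suc n) t h w =
     (let A = pol t h in
      \<Sum>I\<in>Pow A. obs_prob w A I *
         ((if I \<noteq> {} then 1 else 0) + val p01 p11 pol n (Suc t) (h @ [(A, I)]) (upd p01 p11 w A I)))"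

definition total_reward :: "real \<Rightarrow> real \<Rightarrow> nat \<Rightarrow> belief \<Rightarrow> policy \<Rightarrow> real" where
  "total_reward p01 p11 T w0 pol = val p01 p11 pol T 1 [] w0"

definition valid_policy :: "nat \<Rightarrow> nat \<Rightarrow> policy \<Rightarrow> bool" where
  "valid_policy N k pol = (\<forall>t h. pol t h \<subseteq> {1..N} \<and> card (pol t h) = k)"

definition is_topk :: "nat \<Rightarrow> nat \<Rightarrow> belief \<Rightarrow> nat set \<Rightarrow> bool" where
  "is_topk N k w S = (S \<subseteq> {1..N} \<and> card S = k \<and> (\<forall>i\<in>S. \<forall>j\<in>{1..N} - S. w j \<le> w i))"

definition myopic :: "nat \<Rightarrow> nat \<Rightarrow> real \<Rightarrow> real \<Rightarrow> belief \<Rightarrow> policy \<Rightarrow> bool" where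
  "myopic N k p01 p11 w0 pol =
     (\<forall>h. is_topk N k (belief_after p01 p11 w0 h) (pol (Suc (length h)) h))"

definition optimal :: "nat \<Rightarrow> nat \<Rightarrow> real \<Rightarrow> real \<Rightarrow> nat \<Rightarrow> belief \<Rightarrow> policy \<Rightarrow> bool" where
  "optimal N k p01 p11 T w0 pol =
     (valid_policy N k pol \<and>
      (\<forall>pol'. valid_policy N k pol' \<longrightarrow> total_reward p01 p11 T w0 pol' \<le> total_reward p01 p11 T w0 pol))"

end

theory Submission
  imports Defs
begin

(* With T = 2 the second slot is the last one, so whatever is sensed
   there only influences the immediate reward, namely 1 minus the probability that
   all sensed channels are busy.  An exchange argument shows that every set of k
   channels with the largest beliefs minimises this "miss probability" over all
   admissible sets; hence any policy that senses a top-k set in slot 2 earns, in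
   total, a quantity that depends only on its first action A: the one-step
   lookahead value of A.
   For the concrete instance the myopic first action is forced to be {1,2,3};
   evaluating the lookahead values of {1,2,4} and {1,2,3} exactly in rational
   arithmetic shows the former is larger, so the myopic policy is not optimal. *)

section \<open>Miss probability and top-k sets\<close>

text \<open>Probability that all channels of S are busy under independent beliefs w;
  sensing S in the last slot yields expected reward 1 minus this quantity.\<close>
definition miss_prob :: "belief \<Rightarrow> nat set \<Rightarrow> real" where
  "miss_prob w S = (\<Prod>i\<in>S. 1 - w i)"

definition min_miss :: "nat \<Rightarrow> nat \<Rightarrow> belief \<Rightarrow> real" where
  "min_miss N k w = Min (miss_prob w ` {S. S \<subseteq> {1..N} \<and> card S = k})"

lemma prod_busy_le_threshold:
  fixes w :: belief
  assumes "finite D" "finite E" "card D = card E"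
    and "\<forall>i\<in>D. \<forall>j\<in>E. w j \<le> w i" and "\<forall>i\<in>D. w i \<le> 1"
  shows "(\<Prod>i\<in>D. 1 - w i) \<le> (\<Prod>j\<in>E. 1 - w j)"
proof (cases "D = {}")
  case True
  then show ?thesis using assms(2,3) by simp
next
  case False
  define c where "c = Min (w ` D)"
  have c_in: "c \<in> w ` D" using False assms(1) by (simp add: c_def)
  have c_le: "\<forall>i\<in>D. c \<le> w i" using assms(1) by (simp add: c_def)
  have "(\<Prod>i\<in>D. 1 - w i) \<le> (\<Prod>i\<in>D. 1 - c)"
    using c_le assms(5) by (intro prod_mono) auto
  also have "\<dots> = (\<Prod>j\<in>E. 1 - c)" using assms(3) by simp
  also have "\<dots> \<le> (\<Prod>j\<in>E. 1 - w j)"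
    using c_in assms(4,5) by (intro prod_mono) auto
  finally show ?thesis .
qed

text \<open>Exchange argument: a top-k set has miss probability no larger than any
  other set of k channels.\<close>
lemma topk_miss_prob_le:
  assumes top: "is_topk N k w S" and S': "S' \<subseteq> {1..N}" "card S' = k"
    and w01: "\<forall>i\<in>{1..N}. 0 \<le> w i \<and> w i \<le> 1"
  shows "miss_prob w S \<le> miss_prob w S'"
proof -
  have SN: "S \<subseteq> {1..N}" and cS: "card S = k"
    and sep: "\<forall>i\<in>S. \<forall>j\<in>{1..N} - S. w j \<le> w i"
    using top by (auto simp: is_topk_def)
  have fin: "finite S" "finite S'" using SN S' finite_subset by auto
  have same_card: "card (S - S') = card (S' - S)"
    using fin cS S'(2) card_Int_Diff[of S S'] card_Int_Diff[of S' S] by (simp add: Int_commute)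
  have common_nonneg: "0 \<le> (\<Prod>i\<in>S \<inter> S'. 1 - w i)"
    using SN w01 by (intro prod_nonneg) auto
  have diff_le: "(\<Prod>i\<in>S - S'. 1 - w i) \<le> (\<Prod>j\<in>S' - S. 1 - w j)"
    using fin same_card sep S'(1) SN w01 by (intro prod_busy_le_threshold) auto
  have "miss_prob w S = (\<Prod>i\<in>S \<inter> S'. 1 - w i) * (\<Prod>i\<in>S - S'. 1 - w i)"
    using fin by (simp add: miss_prob_def prod.Int_Diff[of S _ S'])
  also have "\<dots> \<le> (\<Prod>i\<in>S \<inter> S'. 1 - w i) * (\<Prod>j\<in>S' - S. 1 - w j)"
    using diff_le common_nonneg by (rule mult_left_mono)
  also have "\<dots> = miss_prob w S'"
    using fin by (simp add: miss_prob_def prod.Int_Diff[of S' _ S] Int_commute)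
  finally show ?thesis .
qed

lemma topk_min_miss:
  assumes "is_topk N k w S" and "\<forall>i\<in>{1..N}. 0 \<le> w i \<and> w i \<le> 1"
  shows "min_miss N k w = miss_prob w S"
proof -
  have "finite {S. S \<subseteq> {1..N} \<and> card S = k}"
    by (rule finite_subset[of _ "Pow {1..N}"]) auto
  moreover have "S \<in> {S. S \<subseteq> {1..N} \<and> card S = k}"
    using assms(1) by (simp add: is_topk_def)
  ultimately show ?thesis
    unfolding min_miss_def using topk_miss_prob_le[OF assms(1) _ _ assms(2)]
    by (intro Min_eqI) auto
qed

lemma topk_unique:
  assumes top: "is_topk N k w S" and S0: "S0 \<subseteq> {1..N}" "card S0 = k"
    and strict: "\<forall>i\<in>S0. \<forall>j\<in>{1..N} - S0. w j < w i"
  shows "S = S0"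
proof -
  have SN: "S \<subseteq> {1..N}" and cS: "card S = k"
    and sep: "\<forall>i\<in>S. \<forall>j\<in>{1..N} - S. w j \<le> w i"
    using top by (auto simp: is_topk_def)
  have fin: "finite S" "finite S0" using SN S0 finite_subset by auto
  have "S0 \<subseteq> S"
  proof
    fix i assume i: "i \<in> S0"
    show "i \<in> S"
    proof (rule ccontr)
      assume "i \<notin> S"
      then have "S0 - S \<noteq> {}" using i by blast
      moreover have "card (S - S0) = card (S0 - S)"
        using fin cS S0(2) card_Int_Diff[of S S0] card_Int_Diff[of S0 S] by (simp add: Int_commute)
      ultimately obtain j where j: "j \<in> S" "j \<notin> S0"
        using fin by (metis card_0_eq finite_Diff ex_in_conv DiffE)
      have "w i \<le> w j" using sep j(1) i \<open>i \<notin> S\<close> S0(1) by auto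
      moreover have "w j < w i" using strict i j SN by auto
      ultimately show False by simp
    qed
  qed
  then show ?thesis using fin cS S0(2) by (metis card_subset_eq)
qed

section \<open>The two-slot value of a policy\<close>

definition lookahead :: "real \<Rightarrow> real \<Rightarrow> nat \<Rightarrow> nat \<Rightarrow> belief \<Rightarrow> nat set \<Rightarrow> real" where
  "lookahead p01 p11 N k w A =
     (\<Sum>I\<in>Pow A. obs_prob w A I *
        ((if I \<noteq> {} then 1 else 0) + (1 - min_miss N k (upd p01 p11 w A I))))"

lemma obs_prob_sum: "finite A \<Longrightarrow> (\<Sum>I\<in>Pow A. obs_prob w A I) = 1"
  using prod_add[of A w "\<lambda>i. 1 - w i"] by (simp add: obs_prob_def)

lemma val_one_slot:
  assumes "finite (pol t h)"
  shows "val p01 p11 pol (Suc 0) t h w = 1 - miss_prob w (pol t h)"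
proof -
  let ?A = "pol t h"
  have "val p01 p11 pol (Suc 0) t h w = (\<Sum>I\<in>Pow ?A. obs_prob w ?A I * (if I \<noteq> {} then 1 else 0))"
    by (simp add: Let_def)
  also have "\<dots> = (\<Sum>I\<in>Pow ?A - {{}}. obs_prob w ?A I)"
    using assms by (subst sum.remove[of _ "{}"]) (auto intro!: sum.cong)
  also have "\<dots> = (\<Sum>I\<in>Pow ?A. obs_prob w ?A I) - obs_prob w ?A {}"
    using assms by (subst sum_diff1) auto
  also have "\<dots> = 1 - miss_prob w ?A"
    using obs_prob_sum[OF assms] by (simp add: obs_prob_def miss_prob_def)
  finally show ?thesis .
qed

lemma upd_bounded:
  assumes "0 \<le> p01" "p01 \<le> 1" "0 \<le> p11" "p11 \<le> 1" "\<forall>i\<in>{1..N}. 0 \<le> w i \<and> w i \<le> 1"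
  shows "\<forall>i\<in>{1..N}. 0 \<le> upd p01 p11 w A I i \<and> upd p01 p11 w A I i \<le> 1"
proof
  fix i assume "i \<in> {1..N}"
  then have wi: "0 \<le> w i" "w i \<le> 1" using assms(5) by auto
  have "w i * p11 \<le> w i" "(1 - w i) * p01 \<le> 1 - w i"
    using wi assms(1-4) by (simp_all add: mult_left_le)
  then have "0 \<le> tau p01 p11 (w i) \<and> tau p01 p11 (w i) \<le> 1"
    using wi assms(1-4) unfolding tau_def by simp
  then show "0 \<le> upd p01 p11 w A I i \<and> upd p01 p11 w A I i \<le> 1"
    using assms(1-4) by (simp add: upd_def)
qed

lemma total_reward_two_slots:
  assumes valid: "valid_policy N k pol"
    and slot2: "\<forall>h. length h = 1 \<longrightarrow> is_topk N k (belief_after p01 p11 w h) (pol 2 h)"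
    and p: "0 \<le> p01" "p01 \<le> 1" "0 \<le> p11" "p11 \<le> 1"
    and w01: "\<forall>i\<in>{1..N}. 0 \<le> w i \<and> w i \<le> 1"
  shows "total_reward p01 p11 2 w pol = lookahead p01 p11 N k w (pol 1 [])"
proof -
  let ?A = "pol 1 []"
  have fin: "finite (pol t h)" for t h
    using valid finite_subset[of "pol t h" "{1..N}"] by (simp add: valid_policy_def)
  have last_slot: "val p01 p11 pol (Suc 0) 2 [(?A, I)] (upd p01 p11 w ?A I)
      = 1 - min_miss N k (upd p01 p11 w ?A I)" for I
  proof -
    have "is_topk N k (upd p01 p11 w ?A I) (pol 2 [(?A, I)])"
      using slot2[rule_format, of "[(?A, I)]"] by (simp add: belief_after_def)
    then show ?thesis
      using val_one_slot[OF fin] topk_min_miss upd_bounded[OF p w01] by simp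
  qed
  have "total_reward p01 p11 2 w pol = val p01 p11 pol (Suc (Suc 0)) 1 [] w"
    by (simp add: total_reward_def numeral_2_eq_2)
  also have "\<dots> = lookahead p01 p11 N k w ?A"
    unfolding lookahead_def val.simps(2)[of p01 p11 pol "Suc 0"] Let_def Suc_1 append_Nil last_slot ..
  finally show ?thesis .
qed

lemma sum_Pow_insert:
  assumes "finite A" "a \<notin> A"
  shows "(\<Sum>I\<in>Pow (insert a A). f I) = (\<Sum>I\<in>Pow A. f I) + (\<Sum>I\<in>Pow A. f (insert a I))"
proof -
  have inj: "inj_on (insert a) (Pow A)"
    using assms(2) unfolding inj_on_def by (metis PowD insert_ident subsetD)
  have "Pow A \<inter> insert a ` Pow A = {}" using assms(2) by blast
  then have "(\<Sum>I\<in>Pow (insert a A). f I) = (\<Sum>I\<in>Pow A. f I) + (\<Sum>I\<in>insert a ` Pow A. f I)"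
    unfolding Pow_insert using assms(1) by (simp add: sum.union_disjoint)
  also have "(\<Sum>I\<in>insert a ` Pow A. f I) = (\<Sum>I\<in>Pow A. f (insert a I))"
    using sum.reindex[OF inj] by simp
  finally show ?thesis .
qed

lemma sum_Pow_three:
  assumes "a \<noteq> b" "a \<noteq> c" "b \<noteq> c"
  shows "(\<Sum>I\<in>Pow {a,b,c}. f I)
    = f {} + f {a} + f {b} + f {c} + f {a,b} + f {a,c} + f {b,c} + f {a,b,c}"
  using assms by (simp add: sum_Pow_insert add_ac)

section \<open>The instance N = 6, k = 3, p11 = 0.3, p01 = 0.5\<close>

definition example_belief :: belief where
  "example_belief = (\<lambda>i. if i = 1 then 0.99 else if i = 2 then 0.5 else if i = 3 then 0.4
     else if i = 4 then 0.39 else if i = 5 then 0.25 else if i = 6 then 0.25 else 0)"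

text \<open>Explicit channel set, so that top-3 conditions reduce to finitely many comparisons.\<close>
lemma atLeastAtMost_six: "{1..6::nat} = {1,2,3,4,5,6}" by auto

lemma example_belief_bounded: "\<forall>i\<in>{1..6}. 0 \<le> example_belief i \<and> example_belief i \<le> 1"
  unfolding atLeastAtMost_six example_belief_def by simp

text \<open>The beliefs strictly separate channels 1, 2, 3 from the rest, so the myopic
  policy must start with {1,2,3}.\<close>
lemma example_myopic_first_action:
  assumes "is_topk 6 3 example_belief S"
  shows "S = {1, 2, 3}"
  using assms by (rule topk_unique) (auto simp: example_belief_def)

lemma example_min_miss:
  assumes "is_topk 6 3 (upd 0.5 0.3 example_belief A I) S"
  shows "min_miss 6 3 (upd 0.5 0.3 example_belief A I) = miss_prob (upd 0.5 0.3 example_belief A I) S"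
  using assms upd_bounded[OF _ _ _ _ example_belief_bounded] by (simp add: topk_min_miss)

lemma example_lookahead_124:
  "lookahead 0.5 0.3 6 3 example_belief {1,2,4} = 369065763/200000000"
proof -
  let ?u = "upd 0.5 0.3 example_belief {1,2,4}"
  have "min_miss 6 3 (?u {}) = miss_prob (?u {}) {1,2,4}"
    "min_miss 6 3 (?u {1}) = miss_prob (?u {1}) {2,4,5}"
    "min_miss 6 3 (?u {2}) = miss_prob (?u {2}) {1,4,5}"
    "min_miss 6 3 (?u {4}) = miss_prob (?u {4}) {1,2,5}"
    "min_miss 6 3 (?u {1,2}) = miss_prob (?u {1,2}) {4,5,6}"
    "min_miss 6 3 (?u {1,4}) = miss_prob (?u {1,4}) {2,5,6}"
    "min_miss 6 3 (?u {2,4}) = miss_prob (?u {2,4}) {1,5,6}"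
    "min_miss 6 3 (?u {1,2,4}) = miss_prob (?u {1,2,4}) {3,5,6}"
    by (rule example_min_miss, unfold is_topk_def atLeastAtMost_six,
        simp add: upd_def tau_def example_belief_def insert_Diff_if)+
  note min_miss_values = this
  have expand: "(\<Sum>I\<in>Pow {1,2,4}. f I) = f {} + f {1} + f {2} + f {4} + f {1,2} + f {1,4}
      + f {2,4} + f {1,2,4}" for f :: "nat set \<Rightarrow> real"
    by (rule sum_Pow_three) simp_all
  show ?thesis
    unfolding lookahead_def expand min_miss_values
    by (simp add: obs_prob_def miss_prob_def upd_def tau_def example_belief_def insert_Diff_if)
qed

text \<open>Exact lookahead value of the myopic first action {1,2,3} (smaller than the
  value for {1,2,4}: 1.845309... versus 1.845328...).\<close>
lemma example_lookahead_123:
  "lookahead 0.5 0.3 6 3 example_belief {1,2,3} = 720824/390625"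
proof -
  let ?u = "upd 0.5 0.3 example_belief {1,2,3}"
  have "min_miss 6 3 (?u {}) = miss_prob (?u {}) {1,2,3}"
    "min_miss 6 3 (?u {1}) = miss_prob (?u {1}) {2,3,5}"
    "min_miss 6 3 (?u {2}) = miss_prob (?u {2}) {1,3,5}"
    "min_miss 6 3 (?u {3}) = miss_prob (?u {3}) {1,2,5}"
    "min_miss 6 3 (?u {1,2}) = miss_prob (?u {1,2}) {3,5,6}"
    "min_miss 6 3 (?u {1,3}) = miss_prob (?u {1,3}) {2,5,6}"
    "min_miss 6 3 (?u {2,3}) = miss_prob (?u {2,3}) {1,5,6}"
    "min_miss 6 3 (?u {1,2,3}) = miss_prob (?u {1,2,3}) {4,5,6}"
    by (rule example_min_miss, unfold is_topk_def atLeastAtMost_six,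
        simp add: upd_def tau_def example_belief_def insert_Diff_if)+
  note min_miss_values = this
  have expand: "(\<Sum>I\<in>Pow {1,2,3}. f I) = f {} + f {1} + f {2} + f {3} + f {1,2} + f {1,3}
      + f {2,3} + f {1,2,3}" for f :: "nat set \<Rightarrow> real"
    by (rule sum_Pow_three) simp_all
  show ?thesis
    unfolding lookahead_def expand min_miss_values
    by (simp add: obs_prob_def miss_prob_def upd_def tau_def example_belief_def insert_Diff_if)
qed

theorem mainTheorem5:
  fixes N k T :: nat and p11 p01 :: real and w0 :: belief and pol1 pol2 :: policy
  assumes "N = 6" and "k = 3" and "T = 2" and "p11 = 0.3" and "p01 = 0.5"
    and "w0 = (\<lambda>i. if i = 1 then 0.99 else if i = 2 then 0.5 else if i = 3 then 0.4
                 else if i = 4 then 0.39 else if i = 5 then 0.25 else if i = 6 then 0.25 else 0)"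
    and "valid_policy N k pol1"
    and "pol1 1 [] = {1, 2, 4}"
    and "\<forall>h. length h = 1 \<longrightarrow> is_topk N k (belief_after p01 p11 w0 h) (pol1 2 h)"
    and "valid_policy N k pol2"
    and "myopic N k p01 p11 w0 pol2"
  shows "pol2 1 [] = {1, 2, 3}
     \<and> total_reward p01 p11 T w0 pol1 > total_reward p01 p11 T w0 pol2
     \<and> \<not> optimal N k p01 p11 T w0 pol2"
proof -
  note concrete = assms(1-6) example_belief_def[symmetric]
  have myopic_slot1: "is_topk 6 3 example_belief (pol2 1 [])"
    using assms(11) unfolding myopic_def concrete
    by (metis belief_after_def foldl_Nil list.size(3) One_nat_def)
  have myopic_slot2: "\<forall>h. length h = 1 \<longrightarrow> is_topk N k (belief_after p01 p11 w0 h) (pol2 2 h)"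
    using assms(11) unfolding myopic_def by (metis Suc_1)
  have first: "pol2 1 [] = {1, 2, 3}"
    using example_myopic_first_action[OF myopic_slot1] .
  have reward1: "total_reward p01 p11 T w0 pol1 = 369065763/200000000"
    using total_reward_two_slots[OF assms(7,9)] example_belief_bounded example_lookahead_124
    unfolding concrete assms(8) by simp
  have reward2: "total_reward p01 p11 T w0 pol2 = 720824/390625"
    using total_reward_two_slots[OF assms(10) myopic_slot2] example_belief_bounded example_lookahead_123
    unfolding concrete first by simp
  then have better: "total_reward p01 p11 T w0 pol1 > total_reward p01 p11 T w0 pol2"
    using reward1 by simp
  then have "\<not> optimal N k p01 p11 T w0 pol2"
    using assms(7) unfolding optimal_def by force
  with first better show ?thesis by blast
qed

end
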